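(* Let $k\ge2$ be an integer and let $H_k$ be the graph with half-edges obtained from $K_{k,k}$ by deleting one vertex but keeping its $k$ incident edges as half-edges. Let $e\ne e'$ be two half-edges of $H_k$ with end vertices $x$ and $x'$ respectively. Then for every positive integer $q$, $H_k$ admits a $(q(k+1)+1,q)$-total colouring $\gamma$ such that $\gamma(e)=0$, $\gamma(e')=2$, $\gamma(x)=qk+1$ and $\gamma(x')=q+2$.
   Context: A half-edge has exactly one end vertex. For integers $p\ge q\ge1$, a $(p,q)$-total colouring of a graph (possibly with half-edges) is a map $c$ from the set of vertices, edges and half-edges to $\{0,1,\ldots,p-1\}$ such that $q\le|c(a)-c(b)|\le p-q$ whenever $a,b$ are two adjacent vertices, two edges/half-edges sharing an end vertex, or a vertex and an edge or half-edge incident with it. *)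

theory Defs
  imports Main
begin

text \<open>Elements of a graph with half-edges: vertices, edges (2-element vertex sets),
  and half-edges (abstract labels, each with exactly one end vertex).\<close>
datatype ('v, 'h) gelem = GV 'v | GE "'v set" | GH 'h

definition gelems :: "'v set \<Rightarrow> 'v set set \<Rightarrow> 'h set \<Rightarrow> ('v, 'h) gelem set" where
  "gelems V E H = GV ` V \<union> GE ` E \<union> GH ` H"

fun gends :: "('h \<Rightarrow> 'v) \<Rightarrow> ('v, 'h) gelem \<Rightarrow> 'v set" where
  "gends endv (GV v) = {}"
| "gends endv (GE e) = e"
| "gends endv (GH h) = {endv h}"

fun is_vertex :: "('v, 'h) gelem \<Rightarrow> bool" where
  "is_vertex (GV v) = True"
| "is_vertex _ = False"

definition gadj :: "'v set set \<Rightarrow> ('h \<Rightarrow> 'v) \<Rightarrow> ('v, 'h) gelem \<Rightarrow> ('v, 'h) gelem \<Rightarrow> bool" where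
  "gadj E endv a b \<longleftrightarrow> a \<noteq> b \<and>
     ((\<exists>u v. a = GV u \<and> b = GV v \<and> {u, v} \<in> E)
    \<or> (\<not> is_vertex a \<and> \<not> is_vertex b \<and> gends endv a \<inter> gends endv b \<noteq> {})
    \<or> (\<exists>v. a = GV v \<and> \<not> is_vertex b \<and> v \<in> gends endv b)
    \<or> (\<exists>v. b = GV v \<and> \<not> is_vertex a \<and> v \<in> gends endv a))"

definition pq_total_colouring ::
  "nat \<Rightarrow> nat \<Rightarrow> 'v set \<Rightarrow> 'v set set \<Rightarrow> 'h set \<Rightarrow> ('h \<Rightarrow> 'v) \<Rightarrow> (('v, 'h) gelem \<Rightarrow> nat) \<Rightarrow> bool" where
  "pq_total_colouring p q V E H endv c \<longleftrightarrow>
     (\<forall>a \<in> gelems V E H. c a < p) \<and>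
     (\<forall>a \<in> gelems V E H. \<forall>b \<in> gelems V E H. gadj E endv a b \<longrightarrow>
        int q \<le> \<bar>int (c a) - int (c b)\<bar> \<and> \<bar>int (c a) - int (c b)\<bar> \<le> int p - int q)"

text \<open>K_{k,k} has parts A 0..A(k-1) and B 0..B(k-1). H_k deletes B(k-1) and keeps its
  k incident edges {A i, B(k-1)} as half-edges; the half-edge coming from edge
  {A i, B(k-1)} is labelled i and has end vertex A i.\<close>
datatype bvert = A nat | B nat

definition Hk_V :: "nat \<Rightarrow> bvert set" where
  "Hk_V k = A ` {..<k} \<union> B ` {..<k - 1}"

definition Hk_E :: "nat \<Rightarrow> bvert set set" where
  "Hk_E k = {{A i, B j} | i j. i < k \<and> j < k - 1}"

definition Hk_H :: "nat \<Rightarrow> nat set" where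
  "Hk_H k = {..<k}"

definition Hk_end :: "nat \<Rightarrow> bvert" where
  "Hk_end i = A i"

end

theory Submission
  imports Defs "HOL-Combinatorics.Transposition"
begin

text \<open>Every element gets a level \<open>S \<in> {0..k}\<close> and an offset \<open>d \<in> {0,1,2}\<close>, and is coloured
  \<open>S * q + d\<close> modulo \<open>p = q(k+1) + 1\<close>. Two elements on different levels are then at cyclic
  distance at least \<open>q\<close>, provided the offset never decreases from one level to the next,
  never drops by more than one, and grows by at most one from level 0 to level \<open>k\<close>.
  It remains to give adjacent elements different levels: the \<open>B\<close>-vertices and half-edges go
  on level 0, the edge \<open>{A i, B j}\<close> on level \<open>(r + j) mod k + 1\<close> where \<open>r\<close> is the rank of
  row \<open>i\<close> (a cyclic Latin square), and the vertex \<open>A i\<close> on the one such level that row \<open>i\<close>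
  misses, namely that of its deleted edge \<open>j = k - 1\<close>. Ranking the rows of \<open>e\<close> and \<open>e'\<close> as
  0 and 1 and choosing the offsets near level 0 suitably gives the prescribed colours.\<close>

definition separated :: "nat \<Rightarrow> nat \<Rightarrow> nat \<Rightarrow> nat \<Rightarrow> bool" where
  "separated p q x y \<longleftrightarrow> int q \<le> \<bar>int x - int y\<bar> \<and> \<bar>int x - int y\<bar> \<le> int p - int q"

lemma separated_sym: "separated p q x y \<Longrightarrow> separated p q y x"
  unfolding separated_def by auto

lemma separated_mod:
  assumes "x \<le> p" "y \<le> p" "separated p q x y"
  shows "separated p q (x mod p) (y mod p)"
proof -
  have "x mod p = (if x = p then 0 else x)" "y mod p = (if y = p then 0 else y)"
    using assms(1,2) by auto
  with assms show ?thesis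
    unfolding separated_def by (simp split: if_splits)
qed

lemma pq_total_colouring_iff_separated:
  "pq_total_colouring p q V E H endv c \<longleftrightarrow>
     (\<forall>a \<in> gelems V E H. c a < p) \<and>
     (\<forall>a \<in> gelems V E H. \<forall>b \<in> gelems V E H. gadj E endv a b \<longrightarrow> separated p q (c a) (c b))"
  unfolding pq_total_colouring_def separated_def ..

fun level_value :: "nat \<Rightarrow> nat \<times> nat \<Rightarrow> nat" where
  "level_value q (S, d) = S * q + d"

fun level_below :: "nat \<Rightarrow> nat \<times> nat \<Rightarrow> nat \<times> nat \<Rightarrow> bool" where
  "level_below k (S1, d1) (S2, d2) \<longleftrightarrow> S1 < S2 \<and> S2 \<le> k \<and> d1 \<le> 2 \<and> d2 \<le> 2 \<and> d1 \<le> d2 + 1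
     \<and> (S2 = S1 + 1 \<longrightarrow> d1 \<le> d2) \<and> (S2 = S1 + k \<longrightarrow> d2 \<le> d1 + 1)"

definition level_compatible :: "nat \<Rightarrow> nat \<times> nat \<Rightarrow> nat \<times> nat \<Rightarrow> bool" where
  "level_compatible k x y \<longleftrightarrow> level_below k x y \<or> level_below k y x"

lemma level_compatible_sym: "level_compatible k x y \<Longrightarrow> level_compatible k y x"
  unfolding level_compatible_def by blast

lemma level_value_le:
  assumes "q \<ge> 1" "S \<le> k" "d \<le> 2"
  shows "level_value q (S, d) \<le> q * (k + 1) + 1"
proof -
  have "S * q \<le> k * q"
    using assms(2) by simp
  moreover have "q * (k + 1) + 1 = k * q + q + 1"
    by (simp add: algebra_simps)
  ultimately show ?thesis
    using assms(1,3) unfolding level_value.simps by linarith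
qed

lemma level_value_le_if_compatible:
  assumes "q \<ge> 1" "level_compatible k x y"
  shows "level_value q x \<le> q * (k + 1) + 1" "level_value q y \<le> q * (k + 1) + 1"
  using assms(2) level_value_le[OF assms(1)] unfolding level_compatible_def
  by (cases x; cases y; auto)+

lemma separated_level_below:
  assumes q: "q \<ge> 1" and below: "level_below k (S1, d1) (S2, d2)"
  shows "separated (q * (k + 1) + 1) q (level_value q (S1, d1)) (level_value q (S2, d2))"
proof -
  have d: "d1 \<le> 2" "d2 \<le> 2" "d1 \<le> d2 + 1"
    and adjacent: "S2 = S1 + 1 \<Longrightarrow> d1 \<le> d2" and opposite: "S2 = S1 + k \<Longrightarrow> d2 \<le> d1 + 1"
    using below by auto
  define D where "D = S2 - S1"
  have D: "S2 = S1 + D" "1 \<le> D" "D \<le> k"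
    using below unfolding D_def by auto
  have diff: "int (level_value q (S1, d1)) - int (level_value q (S2, d2))
      = - (int D * int q + int d2 - int d1)"
    using D(1) by (simp add: algebra_simps)
  have lower: "int q \<le> int D * int q + int d2 - int d1"
  proof (cases "D = 1")
    case False
    then have "2 * int q \<le> int D * int q"
      using D by (intro mult_right_mono) auto
    then show ?thesis
      using q d by linarith
  qed (use adjacent D in auto)
  have upper: "int D * int q + int d2 - int d1 \<le> int (q * (k + 1) + 1) - int q"
  proof (cases "D = k")
    case False
    then have "int D * int q \<le> (int k - 1) * int q"
      using D by (intro mult_right_mono) auto
    then show ?thesis
      using q d by (simp add: algebra_simps)
  qed (use opposite D in \<open>auto simp: algebra_simps\<close>)
  show ?thesis
    using lower upper unfolding separated_def diff by auto
qed

lemma separated_level_compatible: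
  assumes "q \<ge> 1" "level_compatible k x y"
  shows "separated (q * (k + 1) + 1) q (level_value q x) (level_value q y)"
  using assms separated_level_below separated_sym
  unfolding level_compatible_def by (metis prod.exhaust)

definition vertex_level :: "nat \<Rightarrow> nat \<Rightarrow> nat \<times> nat" where
  "vertex_level k r = (if r = 0 then k else r, if r = 1 then 2 else 1)"

definition half_edge_level :: "nat \<Rightarrow> nat \<times> nat" where
  "half_edge_level r = (0, if r = 0 then 0 else if r = 1 then 2 else 1)"

text \<open>The level \<open>(r + j) mod k + 1\<close>, written without \<open>mod\<close> since \<open>r, j < k\<close>.\<close>
definition edge_level :: "nat \<Rightarrow> nat \<Rightarrow> nat \<Rightarrow> nat \<times> nat" where
  "edge_level k r j =
     (let S = if r + j < k then r + j + 1 else r + j + 1 - k in (S, if S \<le> j + 1 then 1 else 2))"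

lemma level_compatible_vertices:
  "r < k \<Longrightarrow> level_compatible k (vertex_level k r) (0, 1)"
  unfolding level_compatible_def vertex_level_def by auto

lemma level_compatible_vertex_half_edge:
  "r < k \<Longrightarrow> level_compatible k (vertex_level k r) (half_edge_level r)"
  unfolding level_compatible_def vertex_level_def half_edge_level_def by auto

lemma level_compatible_vertex_edge:
  "r < k \<Longrightarrow> j < k - 1 \<Longrightarrow> level_compatible k (vertex_level k r) (edge_level k r j)"
  unfolding level_compatible_def vertex_level_def edge_level_def Let_def by auto

lemma level_compatible_B_edge:
  "r < k \<Longrightarrow> j < k - 1 \<Longrightarrow> level_compatible k (0, 1) (edge_level k r j)"
  unfolding level_compatible_def edge_level_def Let_def by auto

lemma level_compatible_half_edge_edge:
  "r < k \<Longrightarrow> j < k - 1 \<Longrightarrow> level_compatible k (half_edge_level r) (edge_level k r j)"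
  unfolding level_compatible_def half_edge_level_def edge_level_def Let_def by auto

lemma level_compatible_edges_row:
  "r < k \<Longrightarrow> j < k - 1 \<Longrightarrow> j' < k - 1 \<Longrightarrow> j \<noteq> j' \<Longrightarrow>
    level_compatible k (edge_level k r j) (edge_level k r j')"
  unfolding level_compatible_def edge_level_def Let_def by auto

lemma level_compatible_edges_column:
  "r < k \<Longrightarrow> r' < k \<Longrightarrow> j < k - 1 \<Longrightarrow> r \<noteq> r' \<Longrightarrow>
    level_compatible k (edge_level k r j) (edge_level k r' j)"
  unfolding level_compatible_def edge_level_def Let_def by auto

lemma ex_bij_betw_lessThan_to_0_1:
  fixes e e' :: nat
  assumes "e < k" "e' < k" "e \<noteq> e'"
  shows "\<exists>\<pi>. bij_betw \<pi> {..<k} {..<k} \<and> \<pi> e = 0 \<and> \<pi> e' = 1"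
proof -
  define \<pi> where "\<pi> = transpose (transpose e 0 e') 1 \<circ> transpose e 0"
  have "bij_betw \<pi> {..<k} {..<k}"
    unfolding \<pi>_def using assms
    by (intro bij_betw_trans[of _ _ "{..<k}"]) (auto simp: transpose_def)
  moreover have "\<pi> e = 0 \<and> \<pi> e' = 1"
    unfolding \<pi>_def using assms(3) by (auto simp: transpose_def)
  ultimately show ?thesis by blast
qed

lemma Hk_elem_cases:
  assumes "x \<in> gelems (Hk_V k) (Hk_E k) (Hk_H k)"
  obtains (A) i where "i < k" "x = GV (A i)"
   | (B) j where "j < k - 1" "x = GV (B j)"
   | (half_edge) i where "i < k" "x = GH i"
   | (edge) i j where "i < k" "j < k - 1" "x = GE {A i, B j}"
  using assms unfolding gelems_def Hk_V_def Hk_E_def Hk_H_def by auto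

lemma Hk_adjacent_cases:
  assumes a: "a \<in> gelems (Hk_V k) (Hk_E k) (Hk_H k)" and b: "b \<in> gelems (Hk_V k) (Hk_E k) (Hk_H k)"
    and adj: "gadj (Hk_E k) Hk_end a b"
    and sym: "\<And>a b. P a b \<Longrightarrow> P b a"
    and A_B: "\<And>i j. i < k \<Longrightarrow> j < k - 1 \<Longrightarrow> P (GV (A i)) (GV (B j))"
    and A_half_edge: "\<And>i. i < k \<Longrightarrow> P (GV (A i)) (GH i)"
    and A_edge: "\<And>i j. i < k \<Longrightarrow> j < k - 1 \<Longrightarrow> P (GV (A i)) (GE {A i, B j})"
    and B_edge: "\<And>i j. i < k \<Longrightarrow> j < k - 1 \<Longrightarrow> P (GV (B j)) (GE {A i, B j})"
    and half_edge_edge: "\<And>i j. i < k \<Longrightarrow> j < k - 1 \<Longrightarrow> P (GH i) (GE {A i, B j})"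
    and edges_row: "\<And>i j j'. i < k \<Longrightarrow> j < k - 1 \<Longrightarrow> j' < k - 1 \<Longrightarrow> j \<noteq> j' \<Longrightarrow>
       P (GE {A i, B j}) (GE {A i, B j'})"
    and edges_column: "\<And>i i' j. i < k \<Longrightarrow> i' < k \<Longrightarrow> j < k - 1 \<Longrightarrow> i \<noteq> i' \<Longrightarrow>
       P (GE {A i, B j}) (GE {A i', B j})"
  shows "P a b"
  using a
proof (cases rule: Hk_elem_cases)
  case (A i)
  from b show ?thesis
    by (cases rule: Hk_elem_cases)
      (use A adj in \<open>auto simp: gadj_def Hk_E_def Hk_end_def doubleton_eq_iff
        intro: A_B A_half_edge A_edge\<close>)
next
  case (B j)
  from b show ?thesis
    by (cases rule: Hk_elem_cases)
      (use B adj in \<open>auto simp: gadj_def Hk_E_def Hk_end_def doubleton_eq_iff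
        intro: sym[OF A_B] B_edge\<close>)
next
  case (half_edge i)
  from b show ?thesis
    by (cases rule: Hk_elem_cases)
      (use half_edge adj in \<open>auto simp: gadj_def Hk_end_def
        intro: sym[OF A_half_edge] half_edge_edge\<close>)
next
  case (edge i j)
  from b show ?thesis
    by (cases rule: Hk_elem_cases)
      (use edge adj in \<open>auto simp: gadj_def Hk_end_def doubleton_eq_iff
        intro: sym[OF A_edge] sym[OF B_edge] sym[OF half_edge_edge] edges_row edges_column\<close>)
qed

definition Hk_level :: "nat \<Rightarrow> (nat \<Rightarrow> nat) \<Rightarrow> (bvert, nat) gelem \<Rightarrow> nat \<times> nat" where
  "Hk_level k \<pi> x = (case x of
      GV (A i) \<Rightarrow> vertex_level k (\<pi> i)
    | GV (B j) \<Rightarrow> (0, 1)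
    | GH i \<Rightarrow> half_edge_level (\<pi> i)
    | GE E \<Rightarrow> edge_level k (\<pi> (THE i. A i \<in> E)) (THE j. B j \<in> E))"

lemma Hk_level_simps [simp]:
  "Hk_level k \<pi> (GV (A i)) = vertex_level k (\<pi> i)"
  "Hk_level k \<pi> (GV (B j)) = (0, 1)"
  "Hk_level k \<pi> (GH i) = half_edge_level (\<pi> i)"
  "Hk_level k \<pi> (GE {A i, B j}) = edge_level k (\<pi> i) j"
proof -
  have "(THE i'. A i' \<in> {A i, B j}) = i" "(THE j'. B j' \<in> {A i, B j}) = j"
    by (rule the_equality; auto)+
  then show "Hk_level k \<pi> (GE {A i, B j}) = edge_level k (\<pi> i) j"
    unfolding Hk_level_def by simp
qed (simp_all add: Hk_level_def)

lemma level_compatible_Hk_adjacent: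
  assumes \<pi>: "bij_betw \<pi> {..<k} {..<k}"
    and "a \<in> gelems (Hk_V k) (Hk_E k) (Hk_H k)" "b \<in> gelems (Hk_V k) (Hk_E k) (Hk_H k)"
    and "gadj (Hk_E k) Hk_end a b"
  shows "level_compatible k (Hk_level k \<pi> a) (Hk_level k \<pi> b)"
proof -
  have rank: "\<pi> i < k" if "i < k" for i
    using \<pi> that by (auto dest: bij_betw_apply)
  have rank_inj: "i = i'" if "\<pi> i = \<pi> i'" "i < k" "i' < k" for i i'
    using \<pi> that by (auto dest: bij_betw_imp_inj_on inj_onD)
  show ?thesis
    by (rule Hk_adjacent_cases[OF assms(2-4),
          where P = "\<lambda>a b. level_compatible k (Hk_level k \<pi> a) (Hk_level k \<pi> b)"])
      (simp_all only: Hk_level_simps, (blast intro: level_compatible_sym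
        level_compatible_vertices level_compatible_vertex_half_edge level_compatible_vertex_edge
        level_compatible_B_edge level_compatible_half_edge_edge level_compatible_edges_row
        level_compatible_edges_column rank dest: rank_inj)+)
qed

lemma pq_total_colouring_Hk_level:
  assumes "q \<ge> 1" "bij_betw \<pi> {..<k} {..<k}"
  defines "p \<equiv> q * (k + 1) + 1"
  shows "pq_total_colouring p q (Hk_V k) (Hk_E k) (Hk_H k) Hk_end
           (\<lambda>x. level_value q (Hk_level k \<pi> x) mod p)"
  unfolding pq_total_colouring_iff_separated
proof (intro conjI ballI impI)
  fix a b
  assume "a \<in> gelems (Hk_V k) (Hk_E k) (Hk_H k)" "b \<in> gelems (Hk_V k) (Hk_E k) (Hk_H k)"
    and "gadj (Hk_E k) Hk_end a b"
  then have compatible: "level_compatible k (Hk_level k \<pi> a) (Hk_level k \<pi> b)"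
    by (intro level_compatible_Hk_adjacent[OF assms(2)])
  show "separated p q (level_value q (Hk_level k \<pi> a) mod p) (level_value q (Hk_level k \<pi> b) mod p)"
    using separated_mod level_value_le_if_compatible[OF assms(1) compatible]
      separated_level_compatible[OF assms(1) compatible]
    unfolding p_def by blast
qed (simp add: p_def)

theorem lemma7:
  fixes k q :: nat and e e' :: nat
  assumes "k \<ge> 2" and "q \<ge> 1"
    and "e \<in> Hk_H k" and "e' \<in> Hk_H k" and "e \<noteq> e'"
  shows "\<exists>\<gamma>. pq_total_colouring (q * (k + 1) + 1) q (Hk_V k) (Hk_E k) (Hk_H k) Hk_end \<gamma>
           \<and> \<gamma> (GH e) = 0 \<and> \<gamma> (GH e') = 2
           \<and> \<gamma> (GV (Hk_end e)) = q * k + 1 \<and> \<gamma> (GV (Hk_end e')) = q + 2"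
proof -
  obtain \<pi> where \<pi>: "bij_betw \<pi> {..<k} {..<k}" "\<pi> e = 0" "\<pi> e' = 1"
    using ex_bij_betw_lessThan_to_0_1 assms unfolding Hk_H_def by blast
  define p where "p = q * (k + 1) + 1"
  define \<gamma> where "\<gamma> x = level_value q (Hk_level k \<pi> x) mod p" for x
  have "2 * q \<le> q * k" "p = q * k + q + 1"
    using assms(1) unfolding p_def by (simp_all add: algebra_simps)
  then have "q + 2 < p" "q * k + 1 < p"
    using assms(2) by linarith+
  then have "\<gamma> (GH e) = 0" "\<gamma> (GH e') = 2"
    and "\<gamma> (GV (Hk_end e)) = q * k + 1" "\<gamma> (GV (Hk_end e')) = q + 2"
    using \<pi>(2,3) unfolding \<gamma>_def
    by (simp_all add: Hk_end_def vertex_level_def half_edge_level_def mult.commute)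
  moreover have "pq_total_colouring p q (Hk_V k) (Hk_E k) (Hk_H k) Hk_end \<gamma>"
    unfolding p_def \<gamma>_def by (rule pq_total_colouring_Hk_level[OF assms(2) \<pi>(1)])
  ultimately show ?thesis
    unfolding p_def by blast
qed

end
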